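(* There is an absolute constant $C$ such that for every odd prime $p$ and every integer $n\ge2$ the following holds. Let $$|\psi\rangle=\Big(I^{\otimes(n-1)}\otimes\big(A_{\pi/p}^\dagger H\big)^{\otimes(n-1)}\otimes\big(e^{-i\pi X/4}H\big)\Big)|\mathrm{PM}_n\rangle,$$ where the identities act on the edge qubits, the $A_{\pi/p}^\dagger H$ factors on the vertex qubits $v_1,\dots,v_{n-1}$, and the last factor on the root vertex qubit $v_0$. Then the distribution $P_\psi$ on $\{0,1\}^{2n-2}\times\{0,1\}$ obtained by measuring $|\psi\rangle$ in the computational basis satisfies $$\Delta\big(P_\psi,(Z,\mathrm{pmmajmod}_p(Z))\big)\le\tfrac12-\tfrac1\pi+\tfrac1{2p}+Cp^{3/2}e^{-n/(4p^2)},$$ where $Z$ is uniform on $\{0,1\}^{2n-2}$.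
   Context: $H$ Hadamard, $X$ Pauli-$X$, $A_\theta=|0\rangle\langle0|+e^{-i\theta X}|1\rangle\langle1|$ (non-unitary). Measurement of a nonzero vector gives outcome $z$ with probability $|\langle z|\psi\rangle|^2/\|\psi\|^2$. Binary tree $B_n$: vertices $v_0,\dots,v_{n-1}$, root $v_0$; parent of $v_i$ ($i\ge1$) is $v_{\lfloor(i-1)/2\rfloor}$, $e_i$ joins $v_i$ to its parent; $h(d)_i=\bigoplus_{j:\,e_j\text{ on path }v_0\to v_i}d_j$ for $d\in\{0,1\}^{n-1}$. $|\mathrm{PM}_n\rangle=\sum_{d}2^{-(n-1)/2}|d\rangle\otimes\frac1{\sqrt2}(|h(d)\,0\rangle+|\overline{h(d)}\,1\rangle)$, qubits ordered $e_1,\dots,e_{n-1},v_1,\dots,v_{n-1},v_0$. For odd prime $p$ and integer $a$, $\mathrm{MM}_p(a)=0$ if $(a\bmod p)\in\{0,\dots,(p-1)/2\}$ and $1$ otherwise. For $z=(d,x)\in\{0,1\}^{n-1}\times\{0,1\}^{n-1}$, $\mathrm{pmmajmod}_p(z)=\mathrm{MM}_p(\sum_{i}x_i(-1)^{h(d)_i})\oplus\mathrm{parity}(x)$. $\Delta$ is total variation distance. *)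

theory Defs
  imports "HOL-Analysis.Analysis" "HOL-Library.FuncSet"
begin

text \<open>Single-qubit operators as 2x2 complex matrices indexed by bool
  (False = |0>, True = |1>); M i j is the entry in row i, column j.\<close>

type_synonym qmat = "bool \<Rightarrow> bool \<Rightarrow> complex"

definition mmul :: "qmat \<Rightarrow> qmat \<Rightarrow> qmat" where
  "mmul A B = (\<lambda>i j. \<Sum>k\<in>UNIV. A i k * B k j)"

definition madd :: "qmat \<Rightarrow> qmat \<Rightarrow> qmat" where
  "madd A B = (\<lambda>i j. A i j + B i j)"

definition adj :: "qmat \<Rightarrow> qmat" where
  "adj A = (\<lambda>i j. cnj (A j i))"

definition Hgate :: qmat where
  "Hgate = (\<lambda>i j. (if i \<and> j then -1 else 1) / complex_of_real (sqrt 2))"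

text \<open>exp(-i theta X) = cos theta I - i sin theta X\<close>
definition expX :: "real \<Rightarrow> qmat" where
  "expX \<theta> = (\<lambda>i j. if i = j then complex_of_real (cos \<theta>)
                      else - \<i> * complex_of_real (sin \<theta>))"

definition proj0 :: qmat where "proj0 = (\<lambda>i j. if \<not> i \<and> \<not> j then 1 else 0)"
definition proj1 :: qmat where "proj1 = (\<lambda>i j. if i \<and> j then 1 else 0)"

definition Aop :: "real \<Rightarrow> qmat" where
  "Aop \<theta> = madd proj0 (mmul (expX \<theta>) proj1)"

text \<open>Binary tree B_n: parent of v_i (i >= 1) is v_((i-1) div 2); h(d)_i is the XOR
  of d_j over the edges e_j on the path from v_0 to v_i.\<close>
fun hpath :: "(nat \<Rightarrow> bool) \<Rightarrow> nat \<Rightarrow> bool" where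
  "hpath d 0 = False"
| "hpath d (Suc i) = (d (Suc i) \<noteq> hpath d (i div 2))"

text \<open>Bit strings indexed by 1..n-1 (edges e_1..e_(n-1), resp. vertices v_1..v_(n-1)).\<close>
definition bits :: "nat \<Rightarrow> (nat \<Rightarrow> bool) set" where
  "bits n = {1..<n} \<rightarrow>\<^sub>E (UNIV :: bool set)"

text \<open>Amplitude of |PM_n> at basis state |d>|x>|b> (edge qubits d, vertex qubits
  v_1..v_(n-1) given by x, root qubit v_0 given by b).\<close>
definition PM_amp :: "nat \<Rightarrow> (nat \<Rightarrow> bool) \<Rightarrow> (nat \<Rightarrow> bool) \<Rightarrow> bool \<Rightarrow> complex" where
  "PM_amp n d x b =
     complex_of_real (2 powr (-(real n - 1) / 2)) * (1 / complex_of_real (sqrt 2)) *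
     ((if (\<forall>i\<in>{1..<n}. x i = hpath d i) \<and> \<not> b then 1 else 0) +
      (if (\<forall>i\<in>{1..<n}. x i = (\<not> hpath d i)) \<and> b then 1 else 0))"

text \<open>psi = (I^(n-1) (x) (A_(pi/p)^dagger H)^(n-1) (x) (e^(-i pi X/4) H)) |PM_n>\<close>
definition psi_amp :: "nat \<Rightarrow> nat \<Rightarrow> (nat \<Rightarrow> bool) \<Rightarrow> (nat \<Rightarrow> bool) \<Rightarrow> bool \<Rightarrow> complex" where
  "psi_amp p n d y c =
     (\<Sum>x\<in>bits n. \<Sum>b\<in>UNIV.
        (\<Prod>i\<in>{1..<n}. mmul (adj (Aop (pi / real p))) Hgate (y i) (x i)) *
        mmul (expX (pi / 4)) Hgate c b * PM_amp n d x b)"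

definition outcomes :: "nat \<Rightarrow> ((nat \<Rightarrow> bool) \<times> (nat \<Rightarrow> bool) \<times> bool) set" where
  "outcomes n = bits n \<times> bits n \<times> (UNIV :: bool set)"

definition P_psi :: "nat \<Rightarrow> nat \<Rightarrow> (nat \<Rightarrow> bool) \<times> (nat \<Rightarrow> bool) \<times> bool \<Rightarrow> real" where
  "P_psi p n z = (case z of (d, x, c) \<Rightarrow> (cmod (psi_amp p n d x c))\<^sup>2) /
     (\<Sum>(d, x, c)\<in>outcomes n. (cmod (psi_amp p n d x c))\<^sup>2)"

text \<open>MM_p(a) = 0 iff (a mod p) in {0..(p-1)/2}; True encodes 1.\<close>
definition MM :: "nat \<Rightarrow> int \<Rightarrow> bool" where
  "MM p a = (\<not> (a mod int p \<in> {0 .. (int p - 1) div 2}))"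

definition parity :: "nat \<Rightarrow> (nat \<Rightarrow> bool) \<Rightarrow> bool" where
  "parity n x = odd (card {i\<in>{1..<n}. x i})"

definition pmmajmod :: "nat \<Rightarrow> nat \<Rightarrow> (nat \<Rightarrow> bool) \<Rightarrow> (nat \<Rightarrow> bool) \<Rightarrow> bool" where
  "pmmajmod p n d x =
     (MM p (\<Sum>i\<in>{1..<n}. (if x i then 1 else 0) * (if hpath d i then -1 else 1))
      \<noteq> parity n x)"

definition Q_target :: "nat \<Rightarrow> nat \<Rightarrow> (nat \<Rightarrow> bool) \<times> (nat \<Rightarrow> bool) \<times> bool \<Rightarrow> real" where
  "Q_target p n z = (case z of (d, x, c) \<Rightarrow>
     if c = pmmajmod p n d x then 1 / 2 ^ (2 * n - 2) else 0)"

definition tvd :: "'a set \<Rightarrow> ('a \<Rightarrow> real) \<Rightarrow> ('a \<Rightarrow> real) \<Rightarrow> real" where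
  "tvd S P Q = (1/2) * (\<Sum>z\<in>S. \<bar>P z - Q z\<bar>)"

end

theory Submission
  imports Defs
begin

text \<open>Both branches of the state PM_n pick up the same vertex phase up to complex conjugation,
  so measuring psi yields (d, y, c) with probability (1 +/- sin (2 pi S / p)) / (2 * 4^(n-1)),
  where S = sum_i y_i (-1)^(h(d)_i) is the signed weight and the sign records whether c equals
  the parity of y. The distance to (Z, pmmajmod_p Z) is therefore the average, over uniform (d, y),
  of a p-periodic mismatch probability of S. Expanding that function in additive characters
  modulo p, the zero frequency contributes its mean over the residues, which a telescoping sine
  sum bounds by 1/2 - 1/pi + 1/(2p); a nonzero frequency t contributes a character sum that
  factorises over the vertices into factors (1 + e(+/- t/p)) / 2 of modulus at most cos (pi/p),
  hence at most exp (-(n-1)/p^2) in total. This proves the bound with C = 1.\<close>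

lemma sum_UNIV_bool: "(\<Sum>b\<in>(UNIV::bool set). f b) = f False + f True"
  by (simp add: UNIV_bool)

lemma Aop_apply:
  "Aop \<theta> a b = (if a then (if b then complex_of_real (cos \<theta>) else 0)
     else (if b then - \<i> * complex_of_real (sin \<theta>) else 1))"
  by (cases a; cases b)
     (simp_all add: Aop_def madd_def mmul_def proj0_def proj1_def expX_def sum_UNIV_bool)

lemma adj_Aop_apply:
  "adj (Aop \<theta>) a b = (if a then (if b then complex_of_real (cos \<theta>) else \<i> * complex_of_real (sin \<theta>))
     else (if b then 0 else 1))"
  by (cases a; cases b) (simp_all add: adj_def Aop_apply)

definition vertex_gate :: "real \<Rightarrow> bool \<Rightarrow> bool \<Rightarrow> complex" where
  "vertex_gate \<theta> a b = (if a then (if b then - cis (-\<theta>) else cis \<theta>) else 1)"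

lemma mmul_adj_Aop_Hgate:
  "mmul (adj (Aop \<theta>)) Hgate a b = vertex_gate \<theta> a b / complex_of_real (sqrt 2)"
  by (cases a; cases b)
     (simp_all add: mmul_def adj_Aop_apply Hgate_def sum_UNIV_bool vertex_gate_def cis.ctr
       complex_eq_iff)

lemma mmul_expX_Hgate:
  "mmul (expX (pi/4)) Hgate c b =
     (if b \<and> c then -1 else 1) * (if b then cnj ((1 - \<i>)/2) else (1 - \<i>)/2)"
  by (cases c; cases b) (simp_all add: mmul_def expX_def Hgate_def sum_UNIV_bool cos_45 sin_45)

lemma vertex_gate_flip: "vertex_gate \<theta> a (\<not> b) = (if a then -1 else 1) * cnj (vertex_gate \<theta> a b)"
  by (cases a; cases b) (auto simp: vertex_gate_def cis_cnj)

lemma vertex_gate_sq: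
  "(vertex_gate \<theta> a b)\<^sup>2 = cis (2 * \<theta> * (if a then (if b then -1 else 1) else 0))"
  by (cases a; cases b) (auto simp: vertex_gate_def power2_eq_square cis_mult)

lemma norm_vertex_gate: "cmod (vertex_gate \<theta> a b) = 1"
  by (auto simp: vertex_gate_def)

section \<open>The measurement distribution\<close>

definition signed_weight :: "nat \<Rightarrow> (nat \<Rightarrow> bool) \<Rightarrow> (nat \<Rightarrow> bool) \<Rightarrow> int" where
  "signed_weight n d y = (\<Sum>i\<in>{1..<n}. (if y i then 1 else 0) * (if hpath d i then -1 else 1))"

lemma of_int_signed_weight:
  "real_of_int (signed_weight n d y) =
     (\<Sum>i\<in>{1..<n}. (if y i then (if hpath d i then -1 else 1) else 0))"
  unfolding signed_weight_def of_int_sum by (rule sum.cong) auto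

lemma pmmajmod_eq: "pmmajmod p n d y = (MM p (signed_weight n d y) \<noteq> parity n y)"
  by (simp add: pmmajmod_def signed_weight_def)

lemma card_bits: "card (bits n) = 2^(n-1)"
  by (simp add: bits_def card_PiE)

lemma sum_bits_delta:
  fixes f :: "(nat \<Rightarrow> bool) \<Rightarrow> 'a::comm_monoid_add"
  shows "(\<Sum>x\<in>bits n. if \<forall>i\<in>{1..<n}. x i = g i then f x else 0) = f (restrict g {1..<n})"
proof -
  have "(\<forall>i\<in>{1..<n}. x i = g i) \<longleftrightarrow> x = restrict g {1..<n}" if "x \<in> bits n" for x
    using that by (auto simp: bits_def PiE_def extensional_def fun_eq_iff)
  then have "(\<Sum>x\<in>bits n. if \<forall>i\<in>{1..<n}. x i = g i then f x else 0)
      = (\<Sum>x\<in>bits n. if x = restrict g {1..<n} then f x else 0)"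
    by (intro sum.cong) auto
  also have "\<dots> = f (restrict g {1..<n})"
    by (simp add: sum.delta bits_def finite_PiE)
  finally show ?thesis .
qed

lemma sum_outcomes:
  "(\<Sum>z\<in>outcomes n. f z) = (\<Sum>d\<in>bits n. \<Sum>y\<in>bits n. f (d, y, False) + f (d, y, True))"
  by (simp add: outcomes_def sum.cartesian_product' sum_UNIV_bool)

definition PM_scale :: "nat \<Rightarrow> complex" where
  "PM_scale n = complex_of_real (2 powr (-(real n - 1) / 2)) * (1 / complex_of_real (sqrt 2))"

lemma psi_amp_eq_two_branches:
  "psi_amp p n d y c =
    PM_scale n * (\<Prod>i\<in>{1..<n}. mmul (adj (Aop (pi / real p))) Hgate (y i) (hpath d i))
      * mmul (expX (pi / 4)) Hgate c False +
    PM_scale n * (\<Prod>i\<in>{1..<n}. mmul (adj (Aop (pi / real p))) Hgate (y i) (\<not> hpath d i))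
      * mmul (expX (pi / 4)) Hgate c True"
proof -
  let ?K = "PM_scale n" and ?M = "mmul (adj (Aop (pi / real p))) Hgate" and ?R = "mmul (expX (pi / 4)) Hgate"
  have PM: "PM_amp n d x b =
      ?K * (if b then (if \<forall>i\<in>{1..<n}. x i = (\<not> hpath d i) then 1 else 0)
           else (if \<forall>i\<in>{1..<n}. x i = hpath d i then 1 else 0))" for x b
    by (cases b) (simp_all add: PM_amp_def PM_scale_def)
  have "psi_amp p n d y c =
      (\<Sum>x\<in>bits n. if \<forall>i\<in>{1..<n}. x i = hpath d i
         then ?K * (\<Prod>i\<in>{1..<n}. ?M (y i) (x i)) * ?R c False else 0) +
      (\<Sum>x\<in>bits n. if \<forall>i\<in>{1..<n}. x i = (\<not> hpath d i)
         then ?K * (\<Prod>i\<in>{1..<n}. ?M (y i) (x i)) * ?R c True else 0)"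
    unfolding psi_amp_def sum_UNIV_bool PM sum.distrib[symmetric]
    by (intro sum.cong) auto
  also have "\<dots> = ?K * (\<Prod>i\<in>{1..<n}. ?M (y i) (hpath d i)) * ?R c False +
      ?K * (\<Prod>i\<in>{1..<n}. ?M (y i) (\<not> hpath d i)) * ?R c True"
    unfolding sum_bits_delta by (intro arg_cong2[where f = "(+)"] arg_cong2[where f = "(*)"]
        arg_cong2[where f = "(*)", OF refl] prod.cong) auto
  finally show ?thesis .
qed

definition vertex_phase :: "real \<Rightarrow> nat \<Rightarrow> (nat \<Rightarrow> bool) \<Rightarrow> (nat \<Rightarrow> bool) \<Rightarrow> complex" where
  "vertex_phase \<theta> n d y = (\<Prod>i\<in>{1..<n}. vertex_gate \<theta> (y i) (hpath d i))"

lemma prod_if_minus_one: "(\<Prod>i\<in>{1..<n}. if y i then -1 else 1 :: complex) = (if parity n y then -1 else 1)"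
proof -
  have "(\<Prod>i\<in>{1..<n}. if y i then -1 else 1 :: complex) = (-1) ^ card {i\<in>{1..<n}. y i}"
    by (subst prod.If_cases) (auto simp: Int_def)
  then show ?thesis by (simp add: parity_def)
qed

lemma prod_vertex_gate_flip:
  "(\<Prod>i\<in>{1..<n}. vertex_gate \<theta> (y i) (\<not> hpath d i)) =
     (if parity n y then -1 else 1) * cnj (vertex_phase \<theta> n d y)"
  by (simp only: vertex_gate_flip prod.distrib prod_if_minus_one cnj_prod vertex_phase_def)

lemma norm_vertex_phase: "cmod (vertex_phase \<theta> n d y) = 1"
  by (simp add: vertex_phase_def prod_norm[symmetric] norm_vertex_gate)

lemma prod_cis: "(\<Prod>i\<in>A. cis (f i)) = cis (\<Sum>i\<in>A. f i)"
proof (cases "finite A")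
  case True then show ?thesis by (induction A rule: finite_induct) (auto simp: cis_mult)
qed auto

lemma vertex_phase_sq: "(vertex_phase \<theta> n d y)\<^sup>2 = cis (2 * \<theta> * real_of_int (signed_weight n d y))"
  by (simp add: vertex_phase_def prod_power_distrib vertex_gate_sq prod_cis
      of_int_signed_weight sum_distrib_left)

lemma norm_add_sign_cnj_sq:
  assumes "\<sigma> = 1 \<or> \<sigma> = -1"
  shows "(cmod (w + complex_of_real \<sigma> * cnj w))\<^sup>2 = 2 * (cmod w)\<^sup>2 + 2 * \<sigma> * Re (w\<^sup>2)"
  using assms by (cases w) (auto simp: cmod_def power2_eq_square algebra_simps)

lemma norm_PM_scale_sq:
  assumes "n \<ge> 1"
  shows "(cmod (PM_scale n))\<^sup>2 = 1 / (2 * 2^(n-1))"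
proof -
  have "(cmod (PM_scale n))\<^sup>2 = (2 powr (-(real n - 1) / 2))\<^sup>2 / 2"
    by (simp add: PM_scale_def norm_mult norm_divide power_mult_distrib power_divide)
  also have "(2 powr (-(real n - 1) / 2))\<^sup>2 = 2 powr (-(real n - 1))"
    by (simp add: powr_powr[symmetric] powr_realpow[symmetric] power2_eq_square powr_add[symmetric])
  also have "\<dots> = inverse (2 powr (real n - 1))"
    by (rule powr_minus)
  also have "2 powr (real n - 1) = 2^(n-1)"
    using assms by (simp add: powr_realpow[symmetric] of_nat_diff)
  finally show ?thesis by (simp add: inverse_eq_divide)
qed

lemma psi_amp_norm_sq:
  assumes "n \<ge> 1"
  shows "(cmod (psi_amp p n d y c))\<^sup>2 =
    (1 + (if c = parity n y then 1 else -1) * sin (2*pi*real_of_int (signed_weight n d y)/real p))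
      / (2 * 4^(n-1))"
proof -
  define w where "w = vertex_phase (pi / real p) n d y * ((1 - \<i>)/2)"
  define \<sigma> where "\<sigma> = (if c = parity n y then 1 else -1 :: real)"
  define s2 where "s2 = complex_of_real (sqrt 2) ^ (n-1)"
  have sign: "(if parity n y then -1 else 1) * (if c then -1 else 1) = complex_of_real \<sigma>"
    by (auto simp: \<sigma>_def)
  have branch0: "(\<Prod>i\<in>{1..<n}. mmul (adj (Aop (pi / real p))) Hgate (y i) (hpath d i))
      = vertex_phase (pi / real p) n d y / s2"
    by (simp add: mmul_adj_Aop_Hgate vertex_phase_def s2_def prod_dividef)
  have branch1: "(\<Prod>i\<in>{1..<n}. mmul (adj (Aop (pi / real p))) Hgate (y i) (\<not> hpath d i))
      = (if parity n y then -1 else 1) * cnj (vertex_phase (pi / real p) n d y) / s2"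
    by (simp only: mmul_adj_Aop_Hgate prod_dividef prod_vertex_gate_flip) (simp add: s2_def)
  have "psi_amp p n d y c = PM_scale n / s2 * (w + complex_of_real \<sigma> * cnj w)"
    unfolding psi_amp_eq_two_branches branch0 branch1 mmul_expX_Hgate sign[symmetric] w_def
    by (simp add: algebra_simps add_divide_distrib diff_divide_distrib)
  then have "(cmod (psi_amp p n d y c))\<^sup>2 =
      (cmod (PM_scale n))\<^sup>2 / (cmod s2)\<^sup>2 * (2 * (cmod w)\<^sup>2 + 2 * \<sigma> * Re (w\<^sup>2))"
    using norm_add_sign_cnj_sq[of \<sigma> w]
    by (simp add: norm_mult norm_divide power_mult_distrib power_divide \<sigma>_def)
  moreover have "(cmod s2)\<^sup>2 = 2^(n-1)"
    by (simp add: s2_def norm_power power_mult_distrib[symmetric] power_even_eq[symmetric] power_mult)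
  moreover have "(cmod w)\<^sup>2 = 1/2"
  proof -
    have "(cmod ((1 - \<i>)/2))\<^sup>2 = 1/2" by (simp add: cmod_def power2_eq_square)
    then show ?thesis by (simp add: w_def norm_mult norm_vertex_phase power_mult_distrib)
  qed
  moreover have "Re (w\<^sup>2) = sin (2*pi*real_of_int (signed_weight n d y)/real p) / 2"
  proof -
    have "((1 - \<i>)/2)\<^sup>2 = - \<i> / 2" by (simp add: power2_eq_square field_simps)
    then have "w\<^sup>2 = cis (2 * (pi / real p) * real_of_int (signed_weight n d y)) * (- \<i> / 2)"
      by (simp only: w_def power_mult_distrib vertex_phase_sq)
    then show ?thesis by (simp add: cis.ctr)
  qed
  ultimately have "(cmod (psi_amp p n d y c))\<^sup>2 = 1 / (2 * 2^(n-1)) / 2^(n-1)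
      * (2 * (1/2) + 2 * \<sigma> * (sin (2*pi*real_of_int (signed_weight n d y)/real p) / 2))"
    by (simp only: norm_PM_scale_sq[OF assms])
  also have "\<dots> = (1 + \<sigma> * sin (2*pi*real_of_int (signed_weight n d y)/real p)) / (2 * 4^(n-1))"
    by (simp flip: power_mult_distrib)
  finally show ?thesis
    by (simp only: \<sigma>_def)
qed

lemma sum_psi_amp_norm_sq:
  assumes "n \<ge> 1"
  shows "(\<Sum>(d, x, c)\<in>outcomes n. (cmod (psi_amp p n d x c))\<^sup>2) = 1"
proof -
  have "(cmod (psi_amp p n d y False))\<^sup>2 + (cmod (psi_amp p n d y True))\<^sup>2 = 1 / 4^(n-1)" for d y
    unfolding psi_amp_norm_sq[OF assms] by (auto simp: field_simps)
  then have "(\<Sum>(d, x, c)\<in>outcomes n. (cmod (psi_amp p n d x c))\<^sup>2) = real (card (bits n))^2 / 4^(n-1)"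
    by (simp add: sum_outcomes power2_eq_square)
  also have "real (card (bits n))^2 = 4^(n-1)"
    by (simp add: card_bits power2_eq_square flip: power_mult_distrib)
  finally show ?thesis by simp
qed

lemma P_psi_eq:
  "n \<ge> 1 \<Longrightarrow> P_psi p n (d, y, c) = (cmod (psi_amp p n d y c))\<^sup>2"
  by (simp add: P_psi_def sum_psi_amp_norm_sq)

text \<open>Given the signed weight s, the probability that the measured root bit differs from
  pmmajmod.\<close>

definition mismatch_prob :: "nat \<Rightarrow> int \<Rightarrow> real" where
  "mismatch_prob p s = (if MM p s then (1 + sin (2*pi*real_of_int s/real p)) / 2
                        else (1 - sin (2*pi*real_of_int s/real p)) / 2)"

lemma abs_diff_bit_dist_sum:
  fixes s A :: real
  assumes "\<bar>s\<bar> \<le> 1" "A > 0"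
  shows "\<bar>(1 + (if False = q then 1 else -1) * s) / (2 * A) - (if False = (m \<noteq> q) then 1 / A else 0)\<bar>
    + \<bar>(1 + (if True = q then 1 else -1) * s) / (2 * A) - (if True = (m \<noteq> q) then 1 / A else 0)\<bar>
    = 2 * (if m then (1 + s) / 2 else (1 - s) / 2) / A"
proof -
  have diffs: "(1+s)/(2*A) - 1/A = -((1-s)/(2*A))" "(1-s)/(2*A) - 1/A = -((1+s)/(2*A))"
    using assms by (auto simp: field_simps)
  have nonneg: "(1+s)/(2*A) \<ge> 0" "(1-s)/(2*A) \<ge> 0"
    using assms by auto
  have doubles: "(1-s)/(2*A) + (1-s)/(2*A) = 2 * ((1 - s) / 2) / A"
    "(1+s)/(2*A) + (1+s)/(2*A) = 2 * ((1 + s) / 2) / A"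
    using assms by (auto simp: field_simps)
  have abs_eqs: "\<bar>1+s\<bar> = 1+s" "\<bar>1-s\<bar> = 1-s" "\<bar>2*A\<bar> = 2*A"
    using assms by auto
  show ?thesis
    by (cases m; cases q) (simp_all add: diffs nonneg doubles abs_eqs)
qed

lemma tvd_eq_mean_mismatch:
  assumes "n \<ge> 1"
  shows "tvd (outcomes n) (P_psi p n) (Q_target p n) =
    (\<Sum>d\<in>bits n. \<Sum>y\<in>bits n. mismatch_prob p (signed_weight n d y)) / 4^(n-1)"
proof -
  have "2*n-2 = 2*(n-1)" by arith
  then have "(2::real)^(2*n-2) = 4^(n-1)" by (simp add: power_mult)
  then have Q: "Q_target p n (d, y, c) =
      (if c = (MM p (signed_weight n d y) \<noteq> parity n y) then 1 / 4^(n-1) else 0)" for d y c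
    by (simp only: Q_target_def prod.case pmmajmod_eq)
  have "\<bar>P_psi p n (d, y, False) - Q_target p n (d, y, False)\<bar>
      + \<bar>P_psi p n (d, y, True) - Q_target p n (d, y, True)\<bar> = 2 * mismatch_prob p (signed_weight n d y) / 4^(n-1)" for d y
    unfolding P_psi_eq[OF assms] psi_amp_norm_sq[OF assms] Q mismatch_prob_def
    by (rule abs_diff_bit_dist_sum) auto
  then show ?thesis
    by (simp add: tvd_def sum_outcomes sum_divide_distrib[symmetric]
        sum_distrib_left[symmetric])
qed

section \<open>Discrete Fourier analysis modulo p\<close>

definition char_sum :: "nat \<Rightarrow> ('a \<Rightarrow> int) \<Rightarrow> 'a set \<Rightarrow> nat \<Rightarrow> complex" where
  "char_sum p S X t = (\<Sum>x\<in>X. cis (2*pi*real t*real_of_int (S x)/real p))"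

definition fourier_coeff :: "nat \<Rightarrow> (int \<Rightarrow> real) \<Rightarrow> nat \<Rightarrow> complex" where
  "fourier_coeff p G t = (\<Sum>r<p. complex_of_real (G (int r)) * cis (-(2*pi*real t*real r/real p)))"

lemma cis_2pi_div_eq_1_iff:
  assumes "p > 0"
  shows "cis (2*pi*real_of_int m/real p) = 1 \<longleftrightarrow> int p dvd m"
proof
  assume "cis (2*pi*real_of_int m/real p) = 1"
  then obtain k :: int where "2*pi*real_of_int m/real p = of_int (2*k) * pi"
    unfolding cis_conv_exp exp_eq_1 by auto
  then have "real_of_int m = real_of_int (k * int p)"
    using assms by (simp add: field_simps)
  then show "int p dvd m" by (simp only: of_int_eq_iff) simp
next
  assume "int p dvd m"
  then obtain k where "m = int p * k" by (auto elim: dvdE)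
  then have "2*pi*real_of_int m/real p = 2*pi*real_of_int k" using assms by simp
  then show "cis (2*pi*real_of_int m/real p) = 1" by (simp add: cis_multiple_2pi)
qed

lemma sum_cis_multiples:
  assumes "p > 0"
  shows "(\<Sum>t<p. cis (2*pi*real t*real_of_int m/real p)) = (if int p dvd m then of_nat p else 0)"
proof -
  define z where "z = cis (2*pi*real_of_int m/real p)"
  have "cis (2*pi*real t*real_of_int m/real p) = z^t" for t
    unfolding z_def Complex.DeMoivre by (simp add: algebra_simps)
  moreover have "z^p = 1"
    unfolding z_def Complex.DeMoivre using assms by (simp add: cis_multiple_2pi)
  ultimately show ?thesis
    using cis_2pi_div_eq_1_iff[OF assms, of m] by (simp add: sum_gp_strict z_def)
qed

lemma periodic_eq_sum_residues:
  fixes G :: "int \<Rightarrow> real"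
  assumes "p > 0" and "\<And>s. G s = G (s mod int p)"
  shows "G s = (\<Sum>r<p. G (int r) * (if int p dvd (s - int r) then 1 else 0))"
proof -
  define r0 where "r0 = nat (s mod int p)"
  have r0: "r0 < p" "int r0 = s mod int p"
    using assms(1) by (auto simp: r0_def nat_less_iff)
  have "int p dvd (s - int r) \<longleftrightarrow> r = r0" if "r < p" for r
    using r0 that by (auto simp: mod_eq_dvd_iff[symmetric])
  then have "(\<Sum>r<p. G (int r) * (if int p dvd (s - int r) then 1 else 0))
      = (\<Sum>r<p. if r = r0 then G (int r) else 0)"
    by (intro sum.cong) auto
  also have "\<dots> = G s" using r0 assms(2) by simp
  finally show ?thesis ..
qed

lemma periodic_sum_fourier_expansion:
  fixes S :: "'a \<Rightarrow> int"
  assumes "p > 0" and "\<And>s. G s = G (s mod int p)"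
  shows "complex_of_real (\<Sum>x\<in>X. G (S x)) = (\<Sum>t<p. fourier_coeff p G t * char_sum p S X t) / of_nat p"
proof -
  have dvd_ind: "(if int p dvd m then 1 else 0 :: complex)
      = (\<Sum>t<p. cis (2*pi*real t*real_of_int m/real p)) / of_nat p" for m
    using assms(1) by (simp add: sum_cis_multiples)
  have split: "cis (2*pi*real t*real_of_int (s - int r)/real p)
      = cis (-(2*pi*real t*real r/real p)) * cis (2*pi*real t*real_of_int s/real p)" for t r s
    by (simp add: cis_mult algebra_simps diff_divide_distrib)
  have "complex_of_real (\<Sum>x\<in>X. G (S x))
      = (\<Sum>x\<in>X. \<Sum>r<p. complex_of_real (G (int r)) * (if int p dvd (S x - int r) then 1 else 0))"
  proof -
    have "complex_of_real (if b then 1 else 0) = (if b then 1 else 0)" for b by simp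
    then show ?thesis
      by (subst periodic_eq_sum_residues[where G = G, OF assms]) (simp only: of_real_sum of_real_mult)
  qed
  also have "\<dots> = (\<Sum>x\<in>X. \<Sum>r<p. \<Sum>t<p. complex_of_real (G (int r))
      * cis (-(2*pi*real t*real r/real p)) * cis (2*pi*real t*real_of_int (S x)/real p) / of_nat p)"
    unfolding dvd_ind split by (simp add: sum_distrib_left sum_divide_distrib mult_ac)
  also have "\<dots> = (\<Sum>t<p. \<Sum>x\<in>X. \<Sum>r<p. complex_of_real (G (int r))
      * cis (-(2*pi*real t*real r/real p)) * cis (2*pi*real t*real_of_int (S x)/real p) / of_nat p)"
    by (subst sum.swap) (intro sum.cong refl sum.swap)
  also have "\<dots> = (\<Sum>t<p. fourier_coeff p G t * char_sum p S X t) / of_nat p"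
    by (simp add: fourier_coeff_def char_sum_def sum_product sum_divide_distrib mult_ac)
  finally show ?thesis .
qed

lemma norm_fourier_coeff_le:
  assumes "\<And>s. \<bar>G s\<bar> \<le> 1"
  shows "cmod (fourier_coeff p G t) \<le> real p"
proof -
  have "cmod (fourier_coeff p G t) \<le> (\<Sum>r<p. cmod (complex_of_real (G (int r)) * cis (-(2*pi*real t*real r/real p))))"
    unfolding fourier_coeff_def by (rule norm_sum)
  also have "\<dots> \<le> (\<Sum>r<p. 1)"
    by (rule sum_mono) (simp add: norm_mult assms)
  finally show ?thesis by simp
qed

lemma periodic_sum_le_mean_plus_char_sums:
  fixes S :: "'a \<Rightarrow> int"
  assumes "p > 0" and "\<And>s. G s = G (s mod int p)" and "\<And>s. \<bar>G s\<bar> \<le> 1"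
  shows "(\<Sum>x\<in>X. G (S x)) \<le> real (card X) * (\<Sum>r<p. G (int r)) / real p
     + (\<Sum>t\<in>{1..<p}. cmod (char_sum p S X t))"
proof -
  let ?a = "fourier_coeff p G" and ?b = "char_sum p S X"
  have "{..<p} = insert 0 {1..<p}" using assms(1) by auto
  then have expansion: "complex_of_real (\<Sum>x\<in>X. G (S x))
      = (?a 0 * ?b 0 + (\<Sum>t\<in>{1..<p}. ?a t * ?b t)) / of_nat p"
    using periodic_sum_fourier_expansion[where G = G, OF assms(1,2)] by simp
  have zero_freq: "?a 0 * ?b 0 = complex_of_real (real (card X) * (\<Sum>r<p. G (int r)))"
    by (simp add: fourier_coeff_def char_sum_def of_real_sum)
  have other_freqs: "Re (\<Sum>t\<in>{1..<p}. ?a t * ?b t) \<le> real p * (\<Sum>t\<in>{1..<p}. cmod (?b t))"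
  proof -
    have "Re (\<Sum>t\<in>{1..<p}. ?a t * ?b t) \<le> (\<Sum>t\<in>{1..<p}. cmod (?a t * ?b t))"
      using complex_Re_le_cmod norm_sum order_trans by blast
    also have "\<dots> \<le> (\<Sum>t\<in>{1..<p}. real p * cmod (?b t))"
      by (rule sum_mono) (simp add: norm_mult mult_right_mono norm_fourier_coeff_le assms(3))
    finally show ?thesis by (simp add: sum_distrib_left)
  qed
  have "(\<Sum>x\<in>X. G (S x)) = Re (complex_of_real (\<Sum>x\<in>X. G (S x)))" by simp
  also have "\<dots> = (Re (?a 0 * ?b 0) + Re (\<Sum>t\<in>{1..<p}. ?a t * ?b t)) / real p"
    unfolding expansion by (simp add: Re_divide power2_eq_square)
  also have "\<dots> \<le> (real (card X) * (\<Sum>r<p. G (int r)) + real p * (\<Sum>t\<in>{1..<p}. cmod (?b t))) / real p"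
    unfolding zero_freq using other_freqs by (intro divide_right_mono) auto
  also have "\<dots> = real (card X) * (\<Sum>r<p. G (int r)) / real p + (\<Sum>t\<in>{1..<p}. cmod (?b t))"
    using assms(1) by (simp add: field_simps)
  finally show ?thesis .
qed

lemma sum_bits_cis_signed_weight:
  "(\<Sum>y\<in>bits n. cis (a * real_of_int (signed_weight n d y)))
     = (\<Prod>i\<in>{1..<n}. 1 + cis (a * (if hpath d i then -1 else 1)))"
proof -
  have "(\<Sum>y\<in>bits n. cis (a * real_of_int (signed_weight n d y))) =
        (\<Sum>y\<in>bits n. \<Prod>i\<in>{1..<n}. cis (a * (if y i then (if hpath d i then -1 else 1) else 0)))"
    by (rule sum.cong) (simp_all add: of_int_signed_weight sum_distrib_left prod_cis)
  also have "\<dots> = (\<Prod>i\<in>{1..<n}. \<Sum>b\<in>UNIV. cis (a * (if b then (if hpath d i then -1 else 1) else 0)))"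
    unfolding bits_def by (rule prod_sum_PiE[symmetric]) auto
  finally show ?thesis by (simp add: sum_UNIV_bool)
qed

lemma norm_one_plus_cis_sign: "cmod (1 + cis (a * (if h then -1 else 1))) = cmod (1 + cis a)"
proof (cases h)
  case True
  have "1 + cis (-a) = cnj (1 + cis a)" by (simp add: cis_cnj)
  then show ?thesis using True by (simp del: complex_cnj_add)
qed simp

lemma norm_char_sum_signed_weight_le:
  "cmod (char_sum p (\<lambda>(d, y). signed_weight n d y) (bits n \<times> bits n) t)
     \<le> 2^(n-1) * (cmod (1 + cis (2*pi*real t/real p)))^(n-1)"
proof -
  define a where "a = 2*pi*real t/real p"
  have "char_sum p (\<lambda>(d, y). signed_weight n d y) (bits n \<times> bits n) t
      = (\<Sum>d\<in>bits n. \<Sum>y\<in>bits n. cis (a * real_of_int (signed_weight n d y)))"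
    by (simp add: char_sum_def case_prod_unfold sum.cartesian_product' a_def)
  then have "cmod (char_sum p (\<lambda>(d, y). signed_weight n d y) (bits n \<times> bits n) t)
      \<le> (\<Sum>d\<in>bits n. cmod (\<Sum>y\<in>bits n. cis (a * real_of_int (signed_weight n d y))))"
    by (simp add: norm_sum)
  also have "\<dots> = (\<Sum>d\<in>bits n. (cmod (1 + cis a))^(n-1))"
    by (simp add: sum_bits_cis_signed_weight prod_norm[symmetric] norm_one_plus_cis_sign)
  finally show ?thesis by (simp add: card_bits a_def)
qed

section \<open>Trigonometric estimates\<close>

lemma sin_ge_half_self:
  assumes "0 \<le> x" "x \<le> pi/3"
  shows "x/2 \<le> sin x"
proof -
  have "(\<lambda>x. sin x - x/2) 0 \<le> (\<lambda>x. sin x - x/2) x"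
  proof (rule DERIV_nonneg_imp_nondecreasing[OF assms(1)])
    fix u assume u: "0 \<le> u" "u \<le> x"
    have "cos (pi/3) \<le> cos u"
      using u assms by (intro cos_monotone_0_pi_le) auto
    then have "0 \<le> cos u - 1/2" by (simp add: cos_60)
    moreover have "DERIV (\<lambda>x. sin x - x/2) u :> cos u - 1/2"
      by (auto intro!: derivative_eq_intros)
    ultimately show "\<exists>y. DERIV (\<lambda>x. sin x - x/2) u :> y \<and> 0 \<le> y" by blast
  qed
  then show ?thesis by simp
qed

lemma cos_ge_one_minus_sq_half: "1 - x^2/2 \<le> cos (x::real)"
proof -
  have "cos x = 1 - 2 * sin (x/2) ^ 2"
    using cos_double_sin[of "x/2"] by simp
  moreover have "sin (x/2) ^ 2 \<le> (x/2)^2"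
    using abs_sin_x_le_abs_x[of "x/2"] by (metis power2_abs power_mono abs_ge_zero)
  ultimately show ?thesis by (simp add: power_divide)
qed

lemma norm_one_plus_cis_sq: "(cmod (1 + cis a))^2 = 2 + 2 * cos a"
proof -
  have "(cmod (1 + cis a))^2 = (1 + cos a)^2 + (sin a)^2"
    by (simp add: cmod_def cis.ctr)
  also have "\<dots> = 2 + 2 * cos a"
    by (simp add: power2_eq_square algebra_simps sin_squared_eq)
  finally show ?thesis .
qed

lemma cos_2pi_frac_le_cos_2pi_div:
  assumes "p \<ge> 3" "1 \<le> t" "t < p"
  shows "cos (2*pi*real t/real p) \<le> cos (2*pi/real p)"
proof -
  have mono: "cos (2*pi*real s/real p) \<le> cos (2*pi/real p)" if s: "1 \<le> s" "2 * s \<le> p" for s :: nat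
  proof (rule cos_monotone_0_pi_le)
    show "0 \<le> 2*pi/real p" by simp
    show "2*pi/real p \<le> 2*pi*real s/real p" using s assms by (intro divide_right_mono) auto
    have "2*real s \<le> real p" using s by linarith
    then show "2*pi*real s/real p \<le> pi" using assms by (simp add: field_simps)
  qed
  show ?thesis
  proof (cases "2*t \<le> p")
    case True then show ?thesis using mono assms by auto
  next
    case False
    have "2*pi*real t/real p = 2*pi - 2*pi*real (p - t)/real p"
      using assms by (simp add: of_nat_diff field_simps)
    then have "cos (2*pi*real t/real p) = cos (2*pi*real (p - t)/real p)"
      by (simp add: cos_diff)
    then show ?thesis using mono[of "p - t"] False assms by simp
  qed
qed

lemma norm_one_plus_cis_sq_le:
  assumes "p \<ge> 3" "1 \<le> t" "t < p"
  shows "(cmod (1 + cis (2*pi*real t/real p)))^2 \<le> 4 * (1 - 2/(real p)^2)"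
proof -
  define x where "x = pi / real p"
  have x: "0 \<le> x" "x \<le> pi/3" using assms by (auto simp: x_def field_simps)
  have "(x/2)^2 \<le> (sin x)^2"
    using sin_ge_half_self[OF x] x by (intro power_mono) auto
  moreover have "8 / (real p)^2 \<le> pi^2/(real p)^2"
  proof -
    have "(2.9::real)^2 \<le> pi^2" using pi_gt3 by (intro power_mono) auto
    then show ?thesis by (intro divide_right_mono) (auto simp: power2_eq_square)
  qed
  ultimately have "2/(real p)^2 \<le> (sin x)^2" by (simp add: x_def power_divide)
  moreover have "cos (2*pi/real p) = 1 - 2 * sin x ^ 2"
    unfolding x_def using cos_double_sin[of "pi / real p"] by (simp add: mult.assoc)
  ultimately show ?thesis
    using norm_one_plus_cis_sq[of "2*pi*real t/real p"] cos_2pi_frac_le_cos_2pi_div[OF assms] by simp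
qed

lemma half_norm_one_plus_cis_pow_le:
  assumes "p \<ge> 3" "1 \<le> t" "t < p"
  shows "(cmod (1 + cis (2*pi*real t/real p)) / 2)^k \<le> exp (- real k / (real p)^2)"
proof -
  define g where "g = cmod (1 + cis (2*pi*real t/real p)) / 2"
  have "g^2 \<le> 1 - 2/(real p)^2"
    using norm_one_plus_cis_sq_le[OF assms] by (simp add: g_def power_divide)
  also have "\<dots> \<le> exp (- 2/(real p)^2)"
    using exp_ge_add_one_self[of "- 2/(real p)^2"] by simp
  finally have g2: "g^2 \<le> exp (- 2/(real p)^2)" .
  have "(g^k)^2 = (g^2)^k"
    by (simp add: power_mult[symmetric] mult.commute)
  also have "\<dots> \<le> (exp (- 2/(real p)^2))^k"
    using g2 by (intro power_mono) auto
  also have "\<dots> = (exp (- real k / (real p)^2))^2"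
    by (simp add: exp_of_nat_mult[symmetric] power2_eq_square exp_add[symmetric] field_simps)
  finally show ?thesis unfolding g_def[symmetric]
    by (rule power2_le_imp_le) simp
qed

lemma norm_char_sum_signed_weight_le_exp:
  assumes "p \<ge> 3" "1 \<le> t" "t < p"
  shows "cmod (char_sum p (\<lambda>(d, y). signed_weight n d y) (bits n \<times> bits n) t)
     \<le> 4^(n-1) * exp (- real (n-1) / (real p)^2)"
proof -
  have "cmod (char_sum p (\<lambda>(d, y). signed_weight n d y) (bits n \<times> bits n) t)
      \<le> 2^(n-1) * (cmod (1 + cis (2*pi*real t/real p)))^(n-1)"
    by (rule norm_char_sum_signed_weight_le)
  also have "\<dots> = 4^(n-1) * (cmod (1 + cis (2*pi*real t/real p)) / 2)^(n-1)"
    by (simp only: power_mult_distrib[symmetric]) simp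
  also have "\<dots> \<le> 4^(n-1) * exp (- real (n-1) / (real p)^2)"
    using half_norm_one_plus_cis_pow_le[OF assms] by (intro mult_left_mono) auto
  finally show ?thesis .
qed

lemma one_plus_cos_div_sin_ge:
  fixes x :: real
  assumes "0 < x" "x \<le> 2"
  shows "2 / x - x / 2 \<le> (1 + cos x) / sin x"
proof -
  have sin_pos: "0 < sin x"
    using assms pi_gt3 by (intro sin_gt_zero) auto
  have "x * x \<le> 2 * 2" using assms by (intro mult_mono) auto
  then have "0 \<le> 2 - x^2/2" by (simp add: power2_eq_square)
  then have "(2 - x^2/2) / x \<le> (2 - x^2/2) / sin x"
    using sin_pos sin_x_le_x[of x] assms by (intro divide_left_mono) auto
  also have "\<dots> \<le> (1 + cos x) / sin x"
    using cos_ge_one_minus_sq_half[of x] sin_pos by (intro divide_right_mono) auto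
  finally show ?thesis
    using assms by (simp add: field_simps power2_eq_square)
qed

section \<open>The mismatch probability\<close>

lemma mismatch_prob_mod: "p > 0 \<Longrightarrow> mismatch_prob p s = mismatch_prob p (s mod int p)"
proof -
  assume p: "p > 0"
  have "real_of_int s = real_of_int (s mod int p) + real p * real_of_int (s div int p)"
    by (metis mult_div_mod_eq of_int_add of_int_mult of_int_of_nat_eq add.commute)
  then have "2*pi*real_of_int s/real p = 2*pi*real_of_int (s mod int p)/real p + 2*pi*real_of_int (s div int p)"
    using p by (simp add: field_simps)
  then have "sin (2*pi*real_of_int s/real p) = sin (2*pi*real_of_int (s mod int p)/real p)"
    by (simp add: sin_add)
  then show ?thesis by (simp add: mismatch_prob_def MM_def)
qed

lemma abs_mismatch_prob_le: "\<bar>mismatch_prob p s\<bar> \<le> 1"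
proof -
  have "\<bar>(1 + u) / 2\<bar> \<le> 1 \<and> \<bar>(1 - u) / 2\<bar> \<le> 1" if "\<bar>u\<bar> \<le> 1" for u :: real
    using that by (auto simp: abs_le_iff)
  from this[OF abs_sin_le_one] show ?thesis
    unfolding mismatch_prob_def by (cases "MM p s") simp_all
qed

lemma sum_sin_telescope:
  assumes "m \<le> k"
  shows "(\<Sum>r\<in>{m..<k}. sin (2 * real r * x) * (2 * sin x)) = cos ((2*real m - 1)*x) - cos ((2*real k - 1)*x)"
proof -
  define g where "g r = cos ((2*real r - 1)*x)" for r :: nat
  have "sin (2 * real r * x) * (2 * sin x) = - (g (Suc r) - g r)" for r
  proof -
    have shift: "(2*real (Suc r) - 1)*x = 2 * real r * x + x" "(2*real r - 1)*x = 2 * real r * x - x"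
      by (simp_all add: algebra_simps)
    show ?thesis unfolding g_def shift cos_add cos_diff by (simp add: algebra_simps)
  qed
  then have "(\<Sum>r\<in>{m..<k}. sin (2 * real r * x) * (2 * sin x)) = - (\<Sum>r\<in>{m..<k}. g (Suc r) - g r)"
    by (simp only: sum_negf)
  also have "\<dots> = g m - g k" using sum_Suc_diff'[OF assms, of g] by simp
  finally show ?thesis by (simp add: g_def)
qed

text \<open>For odd p the residues 0..(p-1)/2 are exactly those r with \<not> MM p r, so the sine sums
  over them and over the remaining residues telescope separately.\<close>

lemma sum_mismatch_prob_residues:
  assumes "p \<ge> 3" "odd p"
  shows "(\<Sum>r<p. mismatch_prob p (int r)) = real p / 2 - (1 + cos (pi/p)) / sin (pi/p) / 2"
proof -
  define q where "q = p div 2"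
  have pq: "p = 2*q + 1" using assms by (simp add: q_def)
  define x where "x = pi / real p"
  define s where "s r = sin (2 * real r * x)" for r :: nat
  have sin_pos: "0 < sin x"
    using assms by (intro sin_gt_zero) (auto simp: x_def field_simps)
  have MM_residue: "MM p (int r) \<longleftrightarrow> q < r" if "r < p" for r
  proof -
    have "int r mod int p = int r" "(int p - 1) div 2 = int q"
      using that pq by simp_all
    then show ?thesis unfolding MM_def by auto
  qed
  have mp: "mismatch_prob p (int r) = (if q < r then (1 + s r)/2 else (1 - s r)/2)" if "r < p" for r
    using MM_residue[OF that] by (simp add: mismatch_prob_def s_def x_def mult_ac)
  have lower: "mismatch_prob p (int r) = (1 - s r)/2" if "r \<in> {0..<q+1}" for r
    using mp[of r] that pq by auto
  have upper: "mismatch_prob p (int r) = (1 + s r)/2" if "r \<in> {q+1..<p}" for r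
    using mp[of r] that by auto
  have "(\<Sum>r<p. mismatch_prob p (int r))
      = (\<Sum>r\<in>{0..<q+1}. mismatch_prob p (int r)) + (\<Sum>r\<in>{q+1..<p}. mismatch_prob p (int r))"
    unfolding lessThan_atLeast0 using pq by (intro sum.atLeastLessThan_concat[symmetric]) auto
  also have "\<dots> = (\<Sum>r\<in>{0..<q+1}. (1 - s r)/2) + (\<Sum>r\<in>{q+1..<p}. (1 + s r)/2)"
    by (intro arg_cong2[where f = "(+)"] sum.cong refl lower upper)
  also have "\<dots> = real p / 2 - ((\<Sum>r\<in>{0..<q+1}. s r) - (\<Sum>r\<in>{q+1..<p}. s r)) / 2"
    using pq by (simp add: sum_subtractf sum.distrib diff_divide_distrib add_divide_distrib
        sum_divide_distrib[symmetric])
  also have "(\<Sum>r\<in>{0..<q+1}. s r) - (\<Sum>r\<in>{q+1..<p}. s r) = (1 + cos x) / sin x"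
  proof -
    have mid: "(2*real (q+1) - 1)*x = pi" and last: "(2*real p - 1)*x = 2*pi - x"
      using assms unfolding x_def pq by (simp_all add: field_simps)
    have "(\<Sum>r\<in>{0..<q+1}. s r) * (2 * sin x) = cos x + 1"
      using sum_sin_telescope[of 0 "q+1" x] mid by (simp only: s_def sum_distrib_right) simp
    moreover have "(\<Sum>r\<in>{q+1..<p}. s r) * (2 * sin x) = -1 - cos x"
      using sum_sin_telescope[of "q+1" p x] mid last pq
      by (simp only: s_def sum_distrib_right) (simp add: cos_diff)
    ultimately show ?thesis
      using sin_pos by (simp add: field_simps)
  qed
  finally show ?thesis by (simp add: x_def)
qed

lemma mean_mismatch_prob_residues_le:
  assumes "p \<ge> 3" "odd p"
  shows "(\<Sum>r<p. mismatch_prob p (int r)) / real p \<le> 1/2 - 1/pi + 1/(2 * real p)"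
proof -
  have "2 / (pi / p) - (pi / p) / 2 \<le> (1 + cos (pi/p)) / sin (pi/p)"
    using assms pi_gt3 pi_less_4 by (intro one_plus_cos_div_sin_ge) (auto simp: field_simps)
  moreover have "pi / p \<le> 2" using assms pi_less_4 by (simp add: field_simps)
  ultimately have "2 * real p / pi - 1 \<le> (1 + cos (pi/p)) / sin (pi/p)"
    by simp
  then have "(\<Sum>r<p. mismatch_prob p (int r)) \<le> real p / 2 - real p / pi + 1/2"
    using sum_mismatch_prob_residues[OF assms] by simp
  then show ?thesis
    using assms by (simp add: field_simps)
qed

lemma tvd_le_explicit:
  assumes "p \<ge> 3" "odd p" "n \<ge> 1"
  shows "tvd (outcomes n) (P_psi p n) (Q_target p n)
     \<le> 1/2 - 1/pi + 1/(2 * real p) + real p * exp (- real (n-1) / (real p)^2)"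
proof -
  define E where "E = exp (- real (n-1) / (real p)^2)"
  define M where "M = (\<Sum>r<p. mismatch_prob p (int r)) / real p"
  define X where "X = bits n \<times> bits n"
  define S where "S = (\<lambda>(d, y). signed_weight n d y)"
  have p: "p > 0" using assms by simp
  have card_X: "real (card X) = 4^(n-1)"
    by (simp add: X_def card_cartesian_product card_bits flip: power_mult_distrib)
  have "(\<Sum>d\<in>bits n. \<Sum>y\<in>bits n. mismatch_prob p (signed_weight n d y)) = (\<Sum>z\<in>X. mismatch_prob p (S z))"
    by (simp add: X_def S_def sum.cartesian_product' case_prod_unfold)
  also have "\<dots> \<le> real (card X) * (\<Sum>r<p. mismatch_prob p (int r)) / real p
      + (\<Sum>t\<in>{1..<p}. cmod (char_sum p S X t))"
    by (intro periodic_sum_le_mean_plus_char_sums p mismatch_prob_mod abs_mismatch_prob_le)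
  also have "\<dots> \<le> 4^(n-1) * M + (\<Sum>t\<in>{1..<p}. 4^(n-1) * E)"
    unfolding card_X times_divide_eq_right[symmetric] unfolding X_def S_def E_def M_def
    using assms(1) by (intro add_left_mono sum_mono norm_char_sum_signed_weight_le_exp) auto
  also have "(\<Sum>t\<in>{1..<p}. (4::real)^(n-1) * E) \<le> 4^(n-1) * (real p * E)"
    by (simp add: E_def)
  finally have "(\<Sum>d\<in>bits n. \<Sum>y\<in>bits n. mismatch_prob p (signed_weight n d y)) / 4^(n-1)
      \<le> (4^(n-1) * M + 4^(n-1) * (real p * E)) / 4^(n-1)"
    by (intro divide_right_mono) auto
  then have "tvd (outcomes n) (P_psi p n) (Q_target p n) \<le> M + real p * E"
    unfolding tvd_eq_mean_mismatch[OF assms(3)] by (simp add: add_divide_distrib)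
  then show ?thesis
    using mean_mismatch_prob_residues_le[OF assms(1,2)] by (simp add: E_def M_def)
qed

lemma mult_exp_le_powr_mult_exp:
  assumes "p \<ge> 1" "n \<ge> 2"
  shows "real p * exp (- real (n-1) / (real p)^2)
     \<le> real p powr (3/2) * exp (- real n / (4 * (real p)\<^sup>2))"
proof (rule mult_mono)
  show "real p \<le> real p powr (3/2)"
    using assms powr_mono[of 1 "3/2" "real p"] by simp
  have "real n \<le> 4 * real (n-1)" using assms by (simp add: of_nat_diff)
  then have "real n / (4 * (real p)\<^sup>2) \<le> 4 * real (n-1) / (4 * (real p)\<^sup>2)"
    by (intro divide_right_mono) auto
  then show "exp (- real (n-1) / (real p)^2) \<le> exp (- real n / (4 * (real p)\<^sup>2))"
    by simp
qed auto

theorem theorem6p5: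
  shows "\<exists>C::real. \<forall>(p::nat) (n::nat). prime p \<and> odd p \<and> n \<ge> 2 \<longrightarrow>
    tvd (outcomes n) (P_psi p n) (Q_target p n)
      \<le> 1/2 - 1/pi + 1/(2 * real p) + C * real p powr (3/2) * exp (- real n / (4 * (real p)\<^sup>2))"
proof (intro exI[of _ 1] allI impI)
  fix p n :: nat
  assume "prime p \<and> odd p \<and> n \<ge> 2"
  then have "p \<ge> 3" "odd p" "n \<ge> 2"
    using prime_ge_2_nat[of p] by (auto simp: le_less numeral_eq_Suc)
  then show "tvd (outcomes n) (P_psi p n) (Q_target p n)
      \<le> 1/2 - 1/pi + 1/(2 * real p) + 1 * real p powr (3/2) * exp (- real n / (4 * (real p)\<^sup>2))"
    using tvd_le_explicit[of p n] mult_exp_le_powr_mult_exp[of p n] by simp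
qed

end
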